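(* Let $N\ge3$, $\mathcal H_{\boldsymbol n,\nu}$ an irreducible unitary representation of $\mathrm{SO}^\circ(N,1)$ and $f=\sum f(\boldsymbol k,\kappa)u(\boldsymbol k,\kappa)\in\mathcal H_{\boldsymbol n,\nu}$. Define $g=\sum_{\lambda\in\Lambda}\sum_{\boldsymbol p\in M_\lambda}g(\boldsymbol p,\lambda)u(\boldsymbol p,\lambda)$ by $g(\boldsymbol m-e_k,\lambda)=\sum_{\boldsymbol k\in M_\lambda}\frac{f(\boldsymbol k,\lambda)}{A^-_k(\boldsymbol m,\lambda)}\mathcal D^{\boldsymbol m,\lambda}(\boldsymbol k,\lambda)$ if $N=2k$, and with $B^-_k$ in place of $A^-_k$ if $N=2k+1$ (for all $\boldsymbol m$ with $\boldsymbol m-e_k\in M_\lambda$), assuming the series involved converge. Then $g$ is a formal solution of $Xg=f$ (i.e. the coefficients of $Xg$, computed formally from the action of $X$ on the basis, equal those of $f$) if and only if $\mathcal D^{\boldsymbol m,\lambda}(f)=0$ for all $(\boldsymbol m,\lambda)$ with $\lambda\in\Lambda$ and $\boldsymbol m\in\lfloor M_\lambda\rfloor$.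
   Context: Let $N\ge 3$ and $k=\lfloor N/2\rfloor$, $G=\mathrm{SO}^\circ(N,1)$, $X=\begin{pmatrix}\mathbf 0_N&e_N\\ e_N^t&0\end{pmatrix}$, $K=\mathrm{SO}(N)$, $M=\mathrm{SO}(N-1)$ the centralizer of $X$ in $K$. Representations (Hirai). Irreducible unitary representations $\mathcal H_{\boldsymbol n,\nu}$ are indexed by integers $\boldsymbol n$ and a complex $\nu$: for $N=2k$, $\boldsymbol n=(n_1,\dots,n_{k-1})$, $0\le n_1\le\dots\le n_{k-1}$; for $N=2k+1$, $\boldsymbol n=(n_1,\dots,n_k)$, $|n_1|\le n_2\le\dots\le n_k$; $\nu\in i\mathbb R_{\ge0}$ (principal series), or $\nu$ real in $(0,\frac{N-1}2]$ (complementary series and end-points), or $\nu\in\mathbb Z_{>0}-\frac12$ (discrete series, $N$ even). $\lceil\boldsymbol n\rceil$ is the last entry of $\boldsymbol n$. The $K$-types are $\mathcal H_{\boldsymbol m}$, each with multiplicity one, for $\boldsymbol m=(m_1,\dots,m_k)\in\mathbb Z^k$ in the set $M_{\boldsymbol n}$ defined by $|m_1|\le n_1\le m_2\le n_2\le\dots\le n_{k-1}\le m_k$ ($N=2k$), resp. $|n_1|\le m_1\le n_2\le m_2\le\dots\le n_k\le m_k$ ($N=2k+1$); $\lceil\boldsymbol m\rceil:=m_k$. $\mathcal H_{\boldsymbol m}$ has an orthonormal Gelfand–Cejtlin basis, adapted to $\mathrm{SO}(N)\supset\mathrm{SO}(N-1)=M\supset\dots\supset\mathrm{SO}(2)$,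 indexed by the set $\Lambda_{\boldsymbol m}$ of integer arrays $\lambda=(\lambda^{(i)}_j)_{1\le i\le N-2,\,1\le j\le\lceil i/2\rceil}$ such that, with $\lambda^{(N-1)}:=\boldsymbol m$, for each $1\le i\le N-2$: if $i=2p-1$, $|\lambda^{(i)}_1|\le\lambda^{(i+1)}_1\le\lambda^{(i)}_2\le\dots\le\lambda^{(i)}_p\le\lambda^{(i+1)}_p$; if $i=2p$, $|\lambda^{(i+1)}_1|\le\lambda^{(i)}_1\le\lambda^{(i+1)}_2\le\dots\le\lambda^{(i)}_p\le\lambda^{(i+1)}_{p+1}$. $\lceil\lambda\rceil$ is the last entry of the top row $\lambda^{(N-2)}$. This gives an orthonormal basis $\{u(\boldsymbol m,\lambda)\}$ of $\mathcal H_{\boldsymbol n,\nu}$; write $f=\sum f(\boldsymbol m,\lambda)u(\boldsymbol m,\lambda)$. Let $\Lambda=\bigcup_{\boldsymbol m}\Lambda_{\boldsymbol m}$, $M_\lambda=\{\boldsymbol m\in M_{\boldsymbol n}:\lambda\in\Lambda_{\boldsymbol m}\}$, $m_\lambda=\min\{\lceil\boldsymbol m\rceil:\boldsymbol m\in M_\lambda\}=\max\{\lceil\boldsymbol n\rceil,\lceil\lambda\rceil\}$, and $\lfloor M_\lambda\rfloor=\{\boldsymbol m\in M_\lambda:\lceil\boldsymbol m\rceil=m_\lambda\}$. Action of $X$. For $N=2k$: $Xu(\boldsymbol m,\lambda)=\sum_{j=1}^k A^-_j(\boldsymbol m,\lambda)u(\boldsymbol m-e_j,\lambda)+\sum_{j=1}^kA^+_j(\boldsymbol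 m,\lambda)u(\boldsymbol m+e_j,\lambda)$, where $e_j$ is the standard basis of $\mathbb Z^k$, $A^-_j(\boldsymbol m,\lambda)=A^+_j(\boldsymbol m-e_j,\lambda)$, and, with $x_r=\lambda^{(2k-2)}_r+r$, $y_j=m_j+j-1$, $z_r=n_r+r-\frac12$, $A_j^+(\boldsymbol m,\lambda)=\frac12\Big(\frac{\prod_{r=1}^{k-1}[(x_r-\frac12)^2-(y_j+\frac12)^2][z_r^2-(y_j+\frac12)^2]\cdot[\nu^2-(y_j+\frac12)^2]}{\prod_{r\ne j}(y_r^2-y_j^2)[y_r^2-(y_j+1)^2]}\Big)^{1/2}$ when $j=k$ or $m_j\ne m_{j+1}$, and $0$ otherwise (terms with indices outside the admissible range vanish). For $N=2k+1$: $Xu(\boldsymbol m,\lambda)=\sum_jB^-_j(\boldsymbol m,\lambda)u(\boldsymbol m-e_j,\lambda)+C(\boldsymbol m,\lambda)u(\boldsymbol m,\lambda)+\sum_jB^+_j(\boldsymbol m,\lambda)u(\boldsymbol m+e_j,\lambda)$, $B^-_j(\boldsymbol m,\lambda)=B^+_j(\boldsymbol m-e_j,\lambda)$, and with $x_r=\lambda^{(2k-1)}_r+r-1$, $y_j=m_j+j$, $z_r=n_r+r-1$: $B^+_j=\Big(\frac{\prod_{r=1}^k(x_r^2-y_j^2)\prod_{r=1}^k(z_r^2-y_j^2)(\nu^2-y_j^2)}{y_j^2(4y_j^2-1)\prod_{r\ne j}(y_r^2-y_j^2)[(y_r-1)^2-y_j^2]}\Big)^{1/2}$, $C=\frac{(\prod_{r=1}^kx_r)(\prod_{r=1}^kz_r)\nu}{\prod_{r=1}^ky_r(y_r-1)}$.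 The functionals $\mathcal D^{\boldsymbol m,\lambda}$. Fix $\lambda\in\Lambda$. For $N=2k$ and $\boldsymbol m,\boldsymbol k\in M_\lambda$, $\mathcal P(\boldsymbol m,\boldsymbol k)$ is the set of sequences $p=(p(1),\dots,p(l+1))$ in $M_\lambda$, $p(1)=\boldsymbol m$, $p(l+1)=\boldsymbol k$, $|p|:=l\ge0$, with steps $h(s)=p(s+1)-p(s)\in\{e_k\pm e_j:1\le j\le k-1\}\cup\{2e_k\}$; weights $\alpha_{e_k\pm e_j}(\boldsymbol p)=A^\pm_j(\boldsymbol p,\lambda)/A^-_k(\boldsymbol p+e_k\pm e_j,\lambda)$, $\alpha_{2e_k}(\boldsymbol p)=A^+_k(\boldsymbol p,\lambda)/A^-_k(\boldsymbol p+2e_k,\lambda)$; $\mathcal D^{\boldsymbol m,\lambda}(\boldsymbol k,\lambda)=\sum_{p\in\mathcal P(\boldsymbol m,\boldsymbol k)}(-1)^{|p|}\prod_{s=1}^{|p|}\alpha_{h(s)}(p(s))$. For $N=2k+1$, use instead the set $\widetilde{\mathcal P}(\boldsymbol m,\boldsymbol k)$ where steps may also be $e_k$, with weights $\beta_{e_k\pm e_j}(\boldsymbol p)=B^\pm_j(\boldsymbol p,\lambda)/B^-_k(\boldsymbol p+e_k\pm e_j,\lambda)$, $\beta_{e_k}(\boldsymbol p)=C(\boldsymbol p,\lambda)/B^-_k(\boldsymbol p+e_k,\lambda)$, $\beta_{2e_k}(\boldsymbol p)=B^+_k(\boldsymbol p,\lambda)/B^-_k(\boldsymbol p+2e_k,\lambda)$.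 Empty sums are $0$, empty products $1$ (so $\mathcal D^{\boldsymbol m,\lambda}(\boldsymbol m,\lambda)=1$). Set $\mathcal D^{\boldsymbol m,\lambda}(\boldsymbol k,\kappa)=0$ for $\kappa\ne\lambda$ and $\mathcal D^{\boldsymbol m,\lambda}(f)=\sum_{\kappa\in\Lambda}\sum_{\boldsymbol k\in M_\kappa}f(\boldsymbol k,\kappa)\mathcal D^{\boldsymbol m,\lambda}(\boldsymbol k,\kappa)$. *)

theory Defs
  imports "HOL-Analysis.Analysis"
begin

text \<open>Integer vectors in Z^k (the K-type labels m, the parameters n) are int lists;
  entries are accessed 1-based via ent.  The vector v + d e_j is shift v j d.
  A Gelfand-Cejtlin array lambda is an int list list whose (i-1)-th element is the
  row lambda^(i), i = 1..N-2.\<close>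

definition kk :: "nat \<Rightarrow> nat" where "kk N = N div 2"

definition ent :: "int list \<Rightarrow> nat \<Rightarrow> int" where "ent v j = v ! (j - 1)"

definition shift :: "int list \<Rightarrow> nat \<Rightarrow> int \<Rightarrow> int list" where
  "shift v j d = v[j - 1 := v ! (j - 1) + d]"

definition interlaceA :: "int list \<Rightarrow> int list \<Rightarrow> bool" where
  "interlaceA a b \<longleftrightarrow> length b = length a \<and>
     (length a \<ge> 1 \<longrightarrow> \<bar>ent a 1\<bar> \<le> ent b 1) \<and>
     (\<forall>j\<in>{1..length a}. ent a j \<le> ent b j) \<and>
     (\<forall>j\<in>{1..<length a}. ent b j \<le> ent a (j + 1))"

definition interlaceB :: "int list \<Rightarrow> int list \<Rightarrow> bool" where
  "interlaceB a b \<longleftrightarrow> length b = length a + 1 \<and>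
     (length a \<ge> 1 \<longrightarrow> \<bar>ent b 1\<bar> \<le> ent a 1) \<and>
     (\<forall>j\<in>{1..length a}. ent b j \<le> ent a j \<and> ent a j \<le> ent b (j + 1))"

definition valid_n :: "nat \<Rightarrow> int list \<Rightarrow> bool" where
  "valid_n N n \<longleftrightarrow>
     (if even N then length n = kk N - 1 \<and>
        (length n \<ge> 1 \<longrightarrow> 0 \<le> ent n 1) \<and> (\<forall>j\<in>{1..<length n}. ent n j \<le> ent n (j + 1))
      else length n = kk N \<and>
        (length n \<ge> 2 \<longrightarrow> \<bar>ent n 1\<bar> \<le> ent n 2) \<and>
        (\<forall>j\<in>{2..<length n}. ent n j \<le> ent n (j + 1)))"

definition valid_nu :: "nat \<Rightarrow> complex \<Rightarrow> bool" where
  "valid_nu N \<nu> \<longleftrightarrow>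
     (Re \<nu> = 0 \<and> Im \<nu> \<ge> 0) \<or>
     (Im \<nu> = 0 \<and> 0 < Re \<nu> \<and> Re \<nu> \<le> (real N - 1) / 2) \<or>
     (even N \<and> (\<exists>j::int. j > 0 \<and> \<nu> = of_int j - 1 / 2))"

definition Ktypes :: "nat \<Rightarrow> int list \<Rightarrow> int list set" where
  "Ktypes N n = {m. if even N then interlaceB n m else interlaceA n m}"

definition GC :: "nat \<Rightarrow> int list \<Rightarrow> int list list set" where
  "GC N m = {lam. length lam = N - 2 \<and>
     (\<forall>i\<in>{1..N - 2}. length (lam ! (i - 1)) = (i + 1) div 2 \<and>
        (let up = (if i = N - 2 then m else lam ! i) in
         if odd i then interlaceA (lam ! (i - 1)) up else interlaceB (lam ! (i - 1)) up))}"

definition Lam :: "nat \<Rightarrow> int list \<Rightarrow> int list list set" where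
  "Lam N n = (\<Union>m\<in>Ktypes N n. GC N m)"

definition Mlam :: "nat \<Rightarrow> int list \<Rightarrow> int list list \<Rightarrow> int list set" where
  "Mlam N n lam = {m \<in> Ktypes N n. lam \<in> GC N m}"

definition floorM :: "nat \<Rightarrow> int list \<Rightarrow> int list list \<Rightarrow> int list set" where
  "floorM N n lam = {m \<in> Mlam N n lam. \<forall>m'\<in>Mlam N n lam. last m \<le> last m'}"

text \<open>index set of the orthonormal basis u(m, lambda)\<close>
definition Idx :: "nat \<Rightarrow> int list \<Rightarrow> (int list \<times> int list list) set" where
  "Idx N n = {(m, lam). m \<in> Ktypes N n \<and> lam \<in> GC N m}"

text \<open>N = 2k: A^+_j(m, lambda); the top row of lambda is last lam = lambda^(N-2)\<close>
definition Aplus :: "nat \<Rightarrow> int list \<Rightarrow> complex \<Rightarrow> int list list \<Rightarrow> nat \<Rightarrow> int list \<Rightarrow> complex" where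
  "Aplus N n \<nu> lam j m =
    (let k = kk N;
         x = (\<lambda>r. of_int (ent (last lam) r) + of_nat r :: complex);
         y = (\<lambda>i. of_int (ent m i) + of_nat i - 1 :: complex);
         z = (\<lambda>r. of_int (ent n r) + of_nat r - 1 / 2 :: complex)
     in if j = k \<or> ent m j \<noteq> ent m (j + 1) then
          1 / 2 * csqrt (
            (\<Prod>r\<in>{1..k - 1}. ((x r - 1 / 2)\<^sup>2 - (y j + 1 / 2)\<^sup>2) * ((z r)\<^sup>2 - (y j + 1 / 2)\<^sup>2))
              * (\<nu>\<^sup>2 - (y j + 1 / 2)\<^sup>2)
            / (\<Prod>r\<in>{1..k} - {j}. ((y r)\<^sup>2 - (y j)\<^sup>2) * ((y r)\<^sup>2 - (y j + 1)\<^sup>2)))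
        else 0)"

definition Bplus :: "nat \<Rightarrow> int list \<Rightarrow> complex \<Rightarrow> int list list \<Rightarrow> nat \<Rightarrow> int list \<Rightarrow> complex" where
  "Bplus N n \<nu> lam j m =
    (let k = kk N;
         x = (\<lambda>r. of_int (ent (last lam) r) + of_nat r - 1 :: complex);
         y = (\<lambda>i. of_int (ent m i) + of_nat i :: complex);
         z = (\<lambda>r. of_int (ent n r) + of_nat r - 1 :: complex)
     in csqrt (
          (\<Prod>r\<in>{1..k}. (x r)\<^sup>2 - (y j)\<^sup>2) * (\<Prod>r\<in>{1..k}. (z r)\<^sup>2 - (y j)\<^sup>2) * (\<nu>\<^sup>2 - (y j)\<^sup>2)
          / ((y j)\<^sup>2 * (4 * (y j)\<^sup>2 - 1) *
             (\<Prod>r\<in>{1..k} - {j}. ((y r)\<^sup>2 - (y j)\<^sup>2) * ((y r - 1)\<^sup>2 - (y j)\<^sup>2)))))"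

definition Cdiag :: "nat \<Rightarrow> int list \<Rightarrow> complex \<Rightarrow> int list list \<Rightarrow> int list \<Rightarrow> complex" where
  "Cdiag N n \<nu> lam m =
    (let k = kk N;
         x = (\<lambda>r. of_int (ent (last lam) r) + of_nat r - 1 :: complex);
         y = (\<lambda>i. of_int (ent m i) + of_nat i :: complex);
         z = (\<lambda>r. of_int (ent n r) + of_nat r - 1 :: complex)
     in (\<Prod>r\<in>{1..k}. x r) * (\<Prod>r\<in>{1..k}. z r) * \<nu> / (\<Prod>r\<in>{1..k}. y r * (y r - 1)))"

definition Xup :: "nat \<Rightarrow> int list \<Rightarrow> complex \<Rightarrow> int list list \<Rightarrow> nat \<Rightarrow> int list \<Rightarrow> complex" where
  "Xup N n \<nu> lam j m = (if even N then Aplus N n \<nu> lam j m else Bplus N n \<nu> lam j m)"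

definition Xdown :: "nat \<Rightarrow> int list \<Rightarrow> complex \<Rightarrow> int list list \<Rightarrow> nat \<Rightarrow> int list \<Rightarrow> complex" where
  "Xdown N n \<nu> lam j m = Xup N n \<nu> lam j (shift m j (-1))"

text \<open>Coefficient of u(p, lambda) in X g, computed formally from
  X u(q,lambda) = sum_j Xdown_j(q) u(q - e_j) + [N odd] C(q) u(q) + sum_j Xup_j(q) u(q + e_j),
  where terms whose index leaves M_lambda vanish.\<close>
definition Xapply :: "nat \<Rightarrow> int list \<Rightarrow> complex \<Rightarrow> (int list \<times> int list list \<Rightarrow> complex)
    \<Rightarrow> int list \<times> int list list \<Rightarrow> complex" where
  "Xapply N n \<nu> g pl =
    (case pl of (p, lam) \<Rightarrow>
      (\<Sum>j\<in>{1..kk N}.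
          (if shift p j 1 \<in> Mlam N n lam
           then Xdown N n \<nu> lam j (shift p j 1) * g (shift p j 1, lam) else 0)
        + (if shift p j (-1) \<in> Mlam N n lam
           then Xup N n \<nu> lam j (shift p j (-1)) * g (shift p j (-1), lam) else 0))
      + (if odd N then Cdiag N n \<nu> lam p * g (p, lam) else 0))"

definition is_step :: "nat \<Rightarrow> int list \<Rightarrow> int list \<Rightarrow> bool" where
  "is_step N p q \<longleftrightarrow>
     (\<exists>j\<in>{1..<kk N}. q = shift (shift p (kk N) 1) j 1 \<or> q = shift (shift p (kk N) 1) j (-1))
     \<or> q = shift p (kk N) 2 \<or> (odd N \<and> q = shift p (kk N) 1)"

definition paths :: "nat \<Rightarrow> int list \<Rightarrow> int list list \<Rightarrow> int list \<Rightarrow> int list \<Rightarrow> int list list set" where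
  "paths N n lam m q = {ps. ps \<noteq> [] \<and> hd ps = m \<and> last ps = q \<and> set ps \<subseteq> Mlam N n lam \<and>
      (\<forall>i. i + 1 < length ps \<longrightarrow> is_step N (ps ! i) (ps ! (i + 1)))}"

definition weight :: "nat \<Rightarrow> int list \<Rightarrow> complex \<Rightarrow> int list list \<Rightarrow> int list \<Rightarrow> int list \<Rightarrow> complex" where
  "weight N n \<nu> lam p q =
    (let k = kk N in
     (\<Sum>j\<in>{1..<k}.
        (if q = shift (shift p k 1) j 1 then Xup N n \<nu> lam j p / Xdown N n \<nu> lam k q else 0)
      + (if q = shift (shift p k 1) j (-1) then Xdown N n \<nu> lam j p / Xdown N n \<nu> lam k q else 0))
     + (if q = shift p k 2 then Xup N n \<nu> lam k p / Xdown N n \<nu> lam k q else 0)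
     + (if odd N \<and> q = shift p k 1 then Cdiag N n \<nu> lam p / Xdown N n \<nu> lam k q else 0))"

definition Dcoef :: "nat \<Rightarrow> int list \<Rightarrow> complex \<Rightarrow> int list list \<Rightarrow> int list \<Rightarrow> int list \<Rightarrow> complex" where
  "Dcoef N n \<nu> lam m q =
     (\<Sum>ps\<in>paths N n lam m q.
        (-1) ^ (length ps - 1) * prod_list (map2 (weight N n \<nu> lam) ps (tl ps)))"

definition Dfun :: "nat \<Rightarrow> int list \<Rightarrow> complex \<Rightarrow> int list \<Rightarrow> int list list
    \<Rightarrow> int list \<times> int list list \<Rightarrow> complex" where
  "Dfun N n \<nu> m lam qk = (case qk of (q, kap) \<Rightarrow> if kap = lam then Dcoef N n \<nu> lam m q else 0)"

definition Dapply :: "nat \<Rightarrow> int list \<Rightarrow> complex \<Rightarrow> int list \<Rightarrow> int list list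
    \<Rightarrow> (int list \<times> int list list \<Rightarrow> complex) \<Rightarrow> complex" where
  "Dapply N n \<nu> m lam f = (\<Sum>\<^sub>\<infinity>qk\<in>Idx N n. f qk * Dfun N n \<nu> m lam qk)"

end

theory Submission
  imports Defs
begin

(*
  Fix lambda, write D(m) for D^{m,lambda}(f) and alpha(m,m') for the weight of a step.
  Cutting every path in P(m,q) after its first step gives
    D^{m,lambda}(q) = delta_{m,q} - sum_{m'} alpha(m,m') D^{m',lambda}(q),
  the sum running over the finitely many one-step successors m' of m in M_lambda;
  summing against f yields f(m,lambda) = D(m) + sum_{m'} alpha(m,m') D(m').
  On the other hand g(p,lambda) = D(p + e_k) / A^-_k(p + e_k), and expanding (X g)(m,lambda)
  term by term produces the same sum, plus D(m) when m - e_k lies in M_lambda.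
  The last entry of a K-type enters the interlacing conditions only as an upper bound, so
  M_lambda is closed under raising it; hence m - e_k is not in M_lambda exactly when
  m lies in floor(M_lambda), and (X g)(m,lambda) = f(m,lambda) - [m in floor(M_lambda)] D(m).
*)

lemma finite_successively_length:
  assumes "\<And>x. finite {y. R x y}"
  shows "finite {xs. length xs = Suc l \<and> hd xs = x \<and> successively R xs}"
proof (induction l arbitrary: x)
  case 0
  have "{xs. length xs = Suc 0 \<and> hd xs = x \<and> successively R xs} \<subseteq> {[x]}"
    by (auto simp: length_Suc_conv)
  then show ?case
    by (rule finite_subset) simp
next
  case (Suc l)
  have "{xs. length xs = Suc (Suc l) \<and> hd xs = x \<and> successively R xs}
        \<subseteq> (#) x ` (\<Union>y\<in>{y. R x y}. {xs. length xs = Suc l \<and> hd xs = y \<and> successively R xs})"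
  proof
    fix xs
    assume xs: "xs \<in> {xs. length xs = Suc (Suc l) \<and> hd xs = x \<and> successively R xs}"
    then obtain y ys where xs_eq: "xs = x # y # ys"
      by (auto simp: length_Suc_conv)
    with xs have "R x y" "y # ys \<in> {xs. length xs = Suc l \<and> hd xs = y \<and> successively R xs}"
      by auto
    then show "xs \<in> (#) x ` (\<Union>y\<in>{y. R x y}. {xs. length xs = Suc l \<and> hd xs = y \<and> successively R xs})"
      using xs_eq by blast
  qed
  then show ?case
    by (rule finite_subset) (intro finite_imageI finite_UN_I assms Suc.IH)
qed

lemma has_sum_sum:
  fixes h :: "'i \<Rightarrow> 'a \<Rightarrow> 'b::topological_comm_monoid_add"
  assumes "finite I" "\<And>i. i \<in> I \<Longrightarrow> (h i has_sum s i) A"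
  shows "((\<lambda>x. \<Sum>i\<in>I. h i x) has_sum (\<Sum>i\<in>I. s i)) A"
  using assms by (induction I rule: finite_induct) (auto intro: has_sum_add)

lemma has_sum_if_eq:
  assumes "a \<in> A"
  shows "((\<lambda>x. if x = a then c else 0) has_sum c) A"
proof -
  have "((\<lambda>x. if x = a then c else 0) has_sum c) {a}"
    using has_sum_finite[of "{a}" "\<lambda>x. if x = a then c else 0"] by simp
  then show ?thesis
    using assms by (subst has_sum_cong_neutral[where T = "{a}"]) auto
qed

lemma length_shift [simp]: "length (shift v j d) = length v"
  by (simp add: shift_def)

lemma nth_shift: "shift v j d ! i = (if i = j - 1 \<and> i < length v then v ! i + d else v ! i)"
  by (cases "j - 1 < length v") (auto simp: shift_def nth_list_update list_update_beyond)

lemma ent_shift: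
  "1 \<le> i \<Longrightarrow> 1 \<le> j \<Longrightarrow> ent (shift v j d) i = ent v i + (if i = j \<and> j \<le> length v then d else 0)"
  by (auto simp: ent_def nth_shift)

lemma shift_0 [simp]: "shift v j 0 = v"
  by (simp add: shift_def)

lemma shift_shift: "shift (shift v j a) j b = shift v j (a + b)"
  by (cases "j - 1 < length v") (auto simp: shift_def nth_list_update list_update_beyond add.assoc)

lemma shift_commute: "shift (shift v i a) j b = shift (shift v j b) i a"
  by (rule nth_equalityI) (auto simp: nth_shift)

lemma shift_last_conv_list_update: "shift v (length v) d = v[length v - 1 := ent v (length v) + d]"
  by (simp add: shift_def ent_def)

lemma last_shift_last: "v \<noteq> [] \<Longrightarrow> last (shift v (length v) d) = last v + d"
  by (simp add: shift_def last_conv_nth)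

lemma last_conv_ent: "v \<noteq> [] \<Longrightarrow> last v = ent v (length v)"
  by (simp add: ent_def last_conv_nth)

lemma interlaceA_update_last:
  assumes "interlaceA a b" "interlaceA a b'" "ent b' (length b) \<le> x"
  shows "interlaceA a (b[length b - 1 := x])"
  using assms unfolding interlaceA_def ent_def
  by (auto simp: nth_list_update) (metis atLeastAtMost_iff order_trans)+

lemma interlaceB_update_last:
  assumes "interlaceB a b" "interlaceB a b'" "ent b' (length b) \<le> x"
  shows "interlaceB a (b[length b - 1 := x])"
  using assms unfolding interlaceB_def ent_def
  by (auto simp: nth_list_update)

lemma GC_update_last:
  assumes lb: "lam \<in> GC N b" and lb': "lam \<in> GC N b'" and le: "ent b' (length b) \<le> x"
  shows "lam \<in> GC N (b[length b - 1 := x])"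
proof -
  have row: "if odd i then interlaceA (lam ! (i - 1)) (if i = N - 2 then c else lam ! i)
             else interlaceB (lam ! (i - 1)) (if i = N - 2 then c else lam ! i)"
    if "lam \<in> GC N c" "i \<in> {1..N - 2}" for c i
    using that unfolding GC_def Let_def by blast
  have "if odd i then interlaceA (lam ! (i - 1)) (if i = N - 2 then b[length b - 1 := x] else lam ! i)
        else interlaceB (lam ! (i - 1)) (if i = N - 2 then b[length b - 1 := x] else lam ! i)"
    if i: "i \<in> {1..N - 2}" for i
    using row[OF lb i] row[OF lb' i]
      interlaceA_update_last[OF _ _ le] interlaceB_update_last[OF _ _ le]
    by (cases "i = N - 2") auto
  then show ?thesis
    using lb unfolding GC_def Let_def mem_Collect_eq by blast
qed

lemma Ktypes_update_last:
  "b \<in> Ktypes N n \<Longrightarrow> b' \<in> Ktypes N n \<Longrightarrow> ent b' (length b) \<le> x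
   \<Longrightarrow> b[length b - 1 := x] \<in> Ktypes N n"
  unfolding Ktypes_def using interlaceA_update_last interlaceB_update_last by auto

lemma Idx_iff: "(m, lam) \<in> Idx N n \<longleftrightarrow> lam \<in> Lam N n \<and> m \<in> Mlam N n lam"
  by (auto simp: Idx_def Lam_def Mlam_def)

lemma paths_conv_successively:
  "paths N n lam m q = {ps. ps \<noteq> [] \<and> hd ps = m \<and> last ps = q \<and> set ps \<subseteq> Mlam N n lam
                            \<and> successively (is_step N) ps}"
  by (simp add: paths_def successively_conv_nth)

lemma finite_is_step: "finite {q. is_step N p q}"
proof -
  have "{q. is_step N p q} \<subseteq> (\<lambda>j. shift (shift p (kk N) 1) j 1) ` {1..<kk N}
          \<union> (\<lambda>j. shift (shift p (kk N) 1) j (-1)) ` {1..<kk N} \<union> {shift p (kk N) 2, shift p (kk N) 1}"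
    by (auto simp: is_step_def)
  then show ?thesis
    by (rule finite_subset) simp
qed

definition successors :: "nat \<Rightarrow> int list \<Rightarrow> int list list \<Rightarrow> int list \<Rightarrow> int list set" where
  "successors N n lam m = {m' \<in> Mlam N n lam. is_step N m m'}"

lemma finite_successors: "finite (successors N n lam m)"
  using finite_is_step[of N m] by (rule rev_finite_subset) (auto simp: successors_def)

lemma paths_Cons_successors:
  assumes m: "m \<in> Mlam N n lam"
  shows "paths N n lam m q = (if m = q then {[m]} else {})
           \<union> (\<Union>m'\<in>successors N n lam m. (#) m ` paths N n lam m' q)"
    (is "_ = ?single \<union> ?longer")
proof (intro equalityI subsetI)
  fix ps
  assume ps: "ps \<in> paths N n lam m q"
  then obtain rest where ps_eq: "ps = m # rest"
    by (cases ps) (auto simp: paths_conv_successively)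
  show "ps \<in> ?single \<union> ?longer"
  proof (cases rest)
    case Nil
    then show ?thesis
      using ps ps_eq by (simp add: paths_conv_successively)
  next
    case (Cons y zs)
    then have "rest \<in> paths N n lam y q" "y \<in> successors N n lam m"
      using ps ps_eq by (auto simp: paths_conv_successively successors_def)
    then show ?thesis
      using ps_eq by blast
  qed
next
  fix ps
  assume "ps \<in> ?single \<union> ?longer"
  then show "ps \<in> paths N n lam m q"
  proof
    assume "ps \<in> ?single"
    then show ?thesis
      using m by (simp add: paths_conv_successively split: if_splits)
  next
    assume "ps \<in> ?longer"
    then obtain m' rest where "m' \<in> successors N n lam m" "rest \<in> paths N n lam m' q" "ps = m # rest"
      by blast
    then show ?thesis
      using m by (cases rest) (auto simp: paths_conv_successively successors_def)
  qed
qed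

lemma Dapply_eq_infsum: "Dapply N n \<nu> m lam f = (\<Sum>\<^sub>\<infinity>q\<in>Mlam N n lam. f (q, lam) * Dcoef N n \<nu> lam m q)"
proof -
  let ?F = "\<lambda>qk. f qk * Dfun N n \<nu> m lam qk"
  have "Dapply N n \<nu> m lam f = infsum ?F ((\<lambda>q. (q, lam)) ` Mlam N n lam)"
    unfolding Dapply_def
    by (rule infsum_cong_neutral) (auto simp: Dfun_def Idx_def Mlam_def split: if_splits)
  also have "\<dots> = infsum (?F \<circ> (\<lambda>q. (q, lam))) (Mlam N n lam)"
    by (rule infsum_reindex) (auto simp: inj_on_def)
  finally show ?thesis
    by (simp add: Dfun_def comp_def)
qed

lemma sum_weight_mult:
  assumes "finite S"
  shows "(\<Sum>m'\<in>S. weight N n \<nu> lam m m' * F m') =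
    (\<Sum>j\<in>{1..<kk N}.
        (if shift (shift m (kk N) 1) j 1 \<in> S
         then Xup N n \<nu> lam j m / Xdown N n \<nu> lam (kk N) (shift (shift m (kk N) 1) j 1)
              * F (shift (shift m (kk N) 1) j 1) else 0)
      + (if shift (shift m (kk N) 1) j (-1) \<in> S
         then Xdown N n \<nu> lam j m / Xdown N n \<nu> lam (kk N) (shift (shift m (kk N) 1) j (-1))
              * F (shift (shift m (kk N) 1) j (-1)) else 0))
    + (if shift m (kk N) 2 \<in> S
       then Xup N n \<nu> lam (kk N) m / Xdown N n \<nu> lam (kk N) (shift m (kk N) 2)
            * F (shift m (kk N) 2) else 0)
    + (if odd N \<and> shift m (kk N) 1 \<in> S
       then Cdiag N n \<nu> lam m / Xdown N n \<nu> lam (kk N) (shift m (kk N) 1)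
            * F (shift m (kk N) 1) else 0)"
proof -
  have delta: "(\<Sum>x\<in>S. (if x = t then c x else 0) * F x) = (if t \<in> S then c t * F t else 0)"
    for t and c :: "int list \<Rightarrow> complex"
  proof -
    have "(\<Sum>x\<in>S. (if x = t then c x else 0) * F x) = (\<Sum>x\<in>S. if x = t then c t * F t else 0)"
      by (rule sum.cong) auto
    then show ?thesis
      using assms by simp
  qed
  show ?thesis
    unfolding weight_def Let_def distrib_right sum_distrib_right sum.distrib
    by (cases "odd N") (simp_all add: sum.swap[where A = S] delta)
qed

context
  fixes N :: nat and n :: "int list"
  assumes N3: "N \<ge> 3" and n_ok: "valid_n N n"
begin

lemma kk_pos: "1 \<le> kk N"
  using N3 by (simp add: kk_def)

lemma length_Ktypes: "m \<in> Ktypes N n \<Longrightarrow> length m = kk N"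
  using n_ok N3 unfolding Ktypes_def valid_n_def interlaceA_def interlaceB_def kk_def
  by (auto split: if_splits)

lemma length_Mlam: "m \<in> Mlam N n lam \<Longrightarrow> length m = kk N"
  using length_Ktypes by (simp add: Mlam_def)

lemma Mlam_update_last:
  "b \<in> Mlam N n lam \<Longrightarrow> b' \<in> Mlam N n lam \<Longrightarrow> ent b' (kk N) \<le> x
   \<Longrightarrow> b[kk N - 1 := x] \<in> Mlam N n lam"
  using Ktypes_update_last[of b N n b' x] GC_update_last[of lam N b b' x] length_Mlam[of b lam]
  by (simp add: Mlam_def)

lemma Mlam_shift_last:
  assumes "v \<in> Mlam N n lam" "0 \<le> d"
  shows "shift v (kk N) d \<in> Mlam N n lam"
  using Mlam_update_last[of v lam v "ent v (kk N) + d"] shift_last_conv_list_update[of v d]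
    length_Mlam[of v lam] assms by simp

lemma Mlam_shift_iff_raised:
  assumes j: "1 \<le> j" "j < kk N" and v: "v \<in> Mlam N n lam"
  shows "shift (shift v (kk N) 1) j d \<in> Mlam N n lam \<longleftrightarrow> shift v j d \<in> Mlam N n lam"
proof
  assume "shift v j d \<in> Mlam N n lam"
  then show "shift (shift v (kk N) 1) j d \<in> Mlam N n lam"
    using Mlam_shift_last shift_commute by simp
next
  assume w: "shift (shift v (kk N) 1) j d \<in> Mlam N n lam"
  have "(shift (shift v (kk N) 1) j d)[kk N - 1 := ent v (kk N)] = shift v j d"
    using j length_Mlam[OF v] kk_pos
    by (intro nth_equalityI) (auto simp: nth_shift nth_list_update ent_def)
  then show "shift v j d \<in> Mlam N n lam"
    using Mlam_update_last[OF w v order_refl] by simp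
qed

lemma successors_shift_iff:
  assumes j: "j \<in> {1..<kk N}" and d: "d = 1 \<or> d = -1" and m: "m \<in> Mlam N n lam"
  shows "shift (shift m (kk N) 1) j d \<in> successors N n lam m \<longleftrightarrow> shift m j d \<in> Mlam N n lam"
proof -
  have "is_step N m (shift (shift m (kk N) 1) j d)"
    using j d unfolding is_step_def by auto
  then show ?thesis
    using Mlam_shift_iff_raised[OF _ _ m] j by (auto simp: successors_def)
qed

lemma shift_last_in_successors:
  assumes "m \<in> Mlam N n lam" and "d = 2 \<or> odd N \<and> d = 1"
  shows "shift m (kk N) d \<in> successors N n lam m"
  using Mlam_shift_last[OF assms(1)] assms(2) by (auto simp: successors_def is_step_def)

lemma floorM_iff: "m \<in> floorM N n lam \<longleftrightarrow> m \<in> Mlam N n lam \<and> shift m (kk N) (-1) \<notin> Mlam N n lam"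
proof
  assume "m \<in> floorM N n lam"
  then have m: "m \<in> Mlam N n lam" and least: "\<forall>m'\<in>Mlam N n lam. last m \<le> last m'"
    by (auto simp: floorM_def)
  have "m \<noteq> []"
    using length_Mlam[OF m] kk_pos by auto
  then have "last (shift m (kk N) (-1)) = last m - 1"
    using last_shift_last[of m "-1"] length_Mlam[OF m] by simp
  then show "m \<in> Mlam N n lam \<and> shift m (kk N) (-1) \<notin> Mlam N n lam"
    using m least by force
next
  assume m: "m \<in> Mlam N n lam \<and> shift m (kk N) (-1) \<notin> Mlam N n lam"
  have last_ent: "last v = ent v (kk N)" if "v \<in> Mlam N n lam" for v
    using last_conv_ent[of v] length_Mlam[OF that] kk_pos by (cases v) auto
  have "last m \<le> last m'" if m': "m' \<in> Mlam N n lam" for m'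
  proof (rule ccontr)
    assume "\<not> last m \<le> last m'"
    then have "ent m' (kk N) \<le> ent m (kk N) + (-1)"
      using m m' last_ent by auto
    then have "m[kk N - 1 := ent m (kk N) + (-1)] \<in> Mlam N n lam"
      using Mlam_update_last m m' by blast
    then show False
      using m shift_last_conv_list_update[of m "-1"] length_Mlam[of m lam] by simp
  qed
  then show "m \<in> floorM N n lam"
    using m by (simp add: floorM_def)
qed

lemma is_step_raises_last:
  "length p = kk N \<Longrightarrow> is_step N p q \<Longrightarrow> ent p (kk N) + 1 \<le> ent q (kk N)"
  using kk_pos unfolding is_step_def by (auto simp: ent_shift)

lemma successively_is_step_last:
  "set ps \<subseteq> Mlam N n lam \<Longrightarrow> successively (is_step N) ps \<Longrightarrow> ps \<noteq> []
   \<Longrightarrow> ent (hd ps) (kk N) + int (length ps - 1) \<le> ent (last ps) (kk N)"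
proof (induction ps rule: induct_list012)
  case (3 x y zs)
  then have "ent x (kk N) + 1 \<le> ent y (kk N)"
    using is_step_raises_last length_Mlam by auto
  then show ?case
    using 3 by auto
qed auto

lemma finite_paths: "finite (paths N n lam m q)"
proof -
  define B where "B = nat (ent q (kk N) - ent m (kk N))"
  have "paths N n lam m q
          \<subseteq> (\<Union>l\<in>{..B}. {ps. length ps = Suc l \<and> hd ps = m \<and> successively (is_step N) ps})"
  proof
    fix ps
    assume ps: "ps \<in> paths N n lam m q"
    then have "ps \<noteq> []" "hd ps = m" "successively (is_step N) ps"
      and "length ps - 1 \<le> B"
      using successively_is_step_last[of ps lam] by (auto simp: paths_conv_successively B_def)
    then show "ps \<in> (\<Union>l\<in>{..B}. {ps. length ps = Suc l \<and> hd ps = m \<and> successively (is_step N) ps})"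
      by force
  qed
  then show ?thesis
    by (rule finite_subset) (simp add: finite_successively_length finite_is_step)
qed

lemma Dcoef_recursion:
  assumes m: "m \<in> Mlam N n lam"
  shows "Dcoef N n \<nu> lam m q = (if m = q then 1 else 0)
           - (\<Sum>m'\<in>successors N n lam m. weight N n \<nu> lam m m' * Dcoef N n \<nu> lam m' q)"
proof -
  let ?F = "\<lambda>ps. (-1::complex) ^ (length ps - 1) * prod_list (map2 (weight N n \<nu> lam) ps (tl ps))"
  let ?S = "successors N n lam m"
  have F_Cons: "?F (m # ps) = - (weight N n \<nu> lam m m' * ?F ps)" if "ps \<in> paths N n lam m' q" for m' ps
    using that by (cases ps) (auto simp: paths_conv_successively)
  have "Dcoef N n \<nu> lam m q = sum ?F (if m = q then {[m]} else {})
          + sum ?F (\<Union>m'\<in>?S. (#) m ` paths N n lam m' q)"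
    unfolding Dcoef_def paths_Cons_successors[OF m]
    by (rule sum.union_disjoint) (auto simp: finite_successors finite_paths, auto simp: paths_conv_successively)
  also have "sum ?F (\<Union>m'\<in>?S. (#) m ` paths N n lam m' q)
             = (\<Sum>m'\<in>?S. sum ?F ((#) m ` paths N n lam m' q))"
    by (rule sum.UNION_disjoint) (auto simp: finite_successors finite_paths, auto simp: paths_conv_successively)
  also have "\<dots> = (\<Sum>m'\<in>?S. - (weight N n \<nu> lam m m' * Dcoef N n \<nu> lam m' q))"
  proof (rule sum.cong[OF refl])
    fix m'
    have "sum ?F ((#) m ` paths N n lam m' q) = (\<Sum>ps\<in>paths N n lam m' q. ?F (m # ps))"
      by (simp add: sum.reindex)
    also have "\<dots> = (\<Sum>ps\<in>paths N n lam m' q. - (weight N n \<nu> lam m m' * ?F ps))"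
      by (rule sum.cong[OF refl F_Cons])
    also have "\<dots> = - (weight N n \<nu> lam m m' * Dcoef N n \<nu> lam m' q)"
      by (simp only: Dcoef_def sum_distrib_left sum_negf)
    finally show "sum ?F ((#) m ` paths N n lam m' q) = - (weight N n \<nu> lam m m' * Dcoef N n \<nu> lam m' q)" .
  qed
  finally show ?thesis
    by (simp add: sum_negf)
qed

lemma f_eq_Dapply_successors:
  assumes m: "m \<in> Mlam N n lam"
    and conv: "\<forall>m\<in>Mlam N n lam. (\<lambda>q. f (q, lam) * Dcoef N n \<nu> lam m q) summable_on Mlam N n lam"
  shows "f (m, lam) = Dapply N n \<nu> m lam f
           + (\<Sum>m'\<in>successors N n lam m. weight N n \<nu> lam m m' * Dapply N n \<nu> m' lam f)"
proof -
  let ?M = "Mlam N n lam" and ?S = "successors N n lam m"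
  have D: "((\<lambda>q. f (q, lam) * Dcoef N n \<nu> lam m' q) has_sum Dapply N n \<nu> m' lam f) ?M"
    if "m' \<in> ?M" for m'
    using conv that by (simp add: Dapply_eq_infsum)
  have "((\<lambda>q. f (q, lam) * Dcoef N n \<nu> lam m q
             + (\<Sum>m'\<in>?S. weight N n \<nu> lam m m' * (f (q, lam) * Dcoef N n \<nu> lam m' q)))
         has_sum (Dapply N n \<nu> m lam f + (\<Sum>m'\<in>?S. weight N n \<nu> lam m m' * Dapply N n \<nu> m' lam f))) ?M"
    by (intro has_sum_add has_sum_sum has_sum_cmult_right D m finite_successors)
       (simp add: successors_def)
  moreover have "f (q, lam) * Dcoef N n \<nu> lam m q
             + (\<Sum>m'\<in>?S. weight N n \<nu> lam m m' * (f (q, lam) * Dcoef N n \<nu> lam m' q))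
          = (if q = m then f (m, lam) else 0)" for q
  proof -
    have "Dcoef N n \<nu> lam m q + (\<Sum>m'\<in>?S. weight N n \<nu> lam m m' * Dcoef N n \<nu> lam m' q)
          = (if q = m then 1 else 0)"
      using Dcoef_recursion[OF m, of \<nu> q] by auto
    moreover have "f (q, lam) * Dcoef N n \<nu> lam m q
             + (\<Sum>m'\<in>?S. weight N n \<nu> lam m m' * (f (q, lam) * Dcoef N n \<nu> lam m' q))
          = f (q, lam) * (Dcoef N n \<nu> lam m q
             + (\<Sum>m'\<in>?S. weight N n \<nu> lam m m' * Dcoef N n \<nu> lam m' q))"
      by (simp add: distrib_left sum_distrib_left mult.left_commute)
    ultimately show ?thesis
      by simp
  qed
  ultimately have "((\<lambda>q. if q = m then f (m, lam) else 0) has_sum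
      (Dapply N n \<nu> m lam f + (\<Sum>m'\<in>?S. weight N n \<nu> lam m m' * Dapply N n \<nu> m' lam f))) ?M"
    by simp
  from has_sum_unique[OF has_sum_if_eq[OF m] this] show ?thesis .
qed

context
  fixes \<nu> :: complex and f g :: "int list \<times> int list list \<Rightarrow> complex" and lam :: "int list list"
  assumes g_def: "\<forall>m. shift m (kk N) (-1) \<in> Mlam N n lam \<longrightarrow>
                  g (shift m (kk N) (-1), lam) =
                    (\<Sum>\<^sub>\<infinity>q\<in>Mlam N n lam. f (q, lam) / Xdown N n \<nu> lam (kk N) m * Dcoef N n \<nu> lam m q)"
begin

lemma g_eq_Dapply:
  assumes "p \<in> Mlam N n lam"
  shows "g (p, lam) = Dapply N n \<nu> (shift p (kk N) 1) lam f / Xdown N n \<nu> lam (kk N) (shift p (kk N) 1)"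
proof -
  have "g (p, lam) = (\<Sum>\<^sub>\<infinity>q\<in>Mlam N n lam. f (q, lam) * Dcoef N n \<nu> lam (shift p (kk N) 1) q
                         * inverse (Xdown N n \<nu> lam (kk N) (shift p (kk N) 1)))"
    using g_def[rule_format, of "shift p (kk N) 1"] assms by (simp add: shift_shift divide_inverse mult_ac)
  then show ?thesis
    by (simp add: infsum_cmult_left' Dapply_eq_infsum divide_inverse)
qed

lemma Xapply_eq_Dapply_successors:
  assumes m: "m \<in> Mlam N n lam"
    and nonzero: "\<forall>m. shift m (kk N) (-1) \<in> Mlam N n lam \<longrightarrow> Xdown N n \<nu> lam (kk N) m \<noteq> 0"
  shows "Xapply N n \<nu> g (m, lam)
           = (if shift m (kk N) (-1) \<in> Mlam N n lam then Dapply N n \<nu> m lam f else 0)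
             + (\<Sum>m'\<in>successors N n lam m. weight N n \<nu> lam m m' * Dapply N n \<nu> m' lam f)"
proof -
  let ?M = "Mlam N n lam" and ?S = "successors N n lam m" and ?k = "kk N"
  let ?D = "\<lambda>p. Dapply N n \<nu> p lam f" and ?Xu = "Xup N n \<nu> lam" and ?Xd = "Xdown N n \<nu> lam"
  let ?up = "\<lambda>j d. shift (shift m ?k 1) j d"
  define T where "T j = (if shift m j 1 \<in> ?M then ?Xd j (shift m j 1) * g (shift m j 1, lam) else 0)
      + (if shift m j (-1) \<in> ?M then ?Xu j (shift m j (-1)) * g (shift m j (-1), lam) else 0)" for j
  have "{1..?k} = insert ?k {1..<?k}"
    using kk_pos by auto
  then have X_split: "Xapply N n \<nu> g (m, lam)
      = (\<Sum>j\<in>{1..<?k}. T j) + T ?k + (if odd N then Cdiag N n \<nu> lam m * g (m, lam) else 0)"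
    by (simp add: Xapply_def T_def add.commute)
  let ?T' = "\<lambda>j. (if ?up j 1 \<in> ?S then ?Xu j m / ?Xd ?k (?up j 1) * ?D (?up j 1) else 0)
      + (if ?up j (-1) \<in> ?S then ?Xd j m / ?Xd ?k (?up j (-1)) * ?D (?up j (-1)) else 0)"
  have T_lt: "T j = ?T' j" if j: "j \<in> {1..<?k}" for j
    using successors_shift_iff[OF j _ m] g_eq_Dapply[of "shift m j 1"] g_eq_Dapply[of "shift m j (-1)"]
    by (simp add: T_def Xdown_def shift_shift shift_commute[of m ?k])
  have T_sum: "(\<Sum>j\<in>{1..<?k}. T j) = (\<Sum>j\<in>{1..<?k}. ?T' j)"
    by (rule sum.cong[OF refl T_lt])
  have up_in_M: "shift m ?k 1 \<in> ?M"
    using Mlam_shift_last[OF m] by simp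
  have T_k: "T ?k = ?Xu ?k m / ?Xd ?k (shift m ?k 2) * ?D (shift m ?k 2)
      + (if shift m ?k (-1) \<in> ?M then ?D m else 0)"
    using up_in_M g_eq_Dapply[OF up_in_M] g_eq_Dapply[of "shift m ?k (-1)"] nonzero
    by (auto simp: T_def Xdown_def shift_shift)
  have C_term: "(if odd N then Cdiag N n \<nu> lam m * g (m, lam) else 0)
      = (if odd N \<and> shift m ?k 1 \<in> ?S then Cdiag N n \<nu> lam m / ?Xd ?k (shift m ?k 1) * ?D (shift m ?k 1)
         else 0)"
    using g_eq_Dapply[OF m] shift_last_in_successors[OF m, of 1] by auto
  show ?thesis
    unfolding X_split sum_weight_mult[OF finite_successors] T_sum T_k C_term
    using shift_last_in_successors[OF m, of 2] by (simp add: add_ac)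
qed

lemma Xapply_eq_minus_floorM:
  assumes m: "m \<in> Mlam N n lam"
    and conv: "\<forall>m\<in>Mlam N n lam. (\<lambda>q. f (q, lam) * Dcoef N n \<nu> lam m q) summable_on Mlam N n lam"
    and nonzero: "\<forall>m. shift m (kk N) (-1) \<in> Mlam N n lam \<longrightarrow> Xdown N n \<nu> lam (kk N) m \<noteq> 0"
  shows "Xapply N n \<nu> g (m, lam) = f (m, lam) - (if m \<in> floorM N n lam then Dapply N n \<nu> m lam f else 0)"
  using Xapply_eq_Dapply_successors[OF m nonzero] f_eq_Dapply_successors[OF m conv]
    floorM_iff m
  by auto

end

end

theorem mainTheorem9:
  fixes N :: nat and n :: "int list" and \<nu> :: complex
    and f g :: "int list \<times> int list list \<Rightarrow> complex"
  assumes N3: "N \<ge> 3"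
    and n_ok: "valid_n N n"
    and nu_ok: "valid_nu N \<nu>"
    and f_in_H: "(\<lambda>x. (norm (f x))\<^sup>2) summable_on Idx N n"
    and conv: "\<forall>lam\<in>Lam N n. \<forall>m\<in>Mlam N n lam.
                 (\<lambda>q. f (q, lam) * Dcoef N n \<nu> lam m q) summable_on Mlam N n lam"
    and nonzero: "\<forall>lam\<in>Lam N n. \<forall>m. shift m (kk N) (-1) \<in> Mlam N n lam \<longrightarrow>
                    Xdown N n \<nu> lam (kk N) m \<noteq> 0"
    and g_def: "\<forall>lam\<in>Lam N n. \<forall>m. shift m (kk N) (-1) \<in> Mlam N n lam \<longrightarrow>
                  g (shift m (kk N) (-1), lam) =
                    (\<Sum>\<^sub>\<infinity>q\<in>Mlam N n lam. f (q, lam) / Xdown N n \<nu> lam (kk N) m * Dcoef N n \<nu> lam m q)"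
  shows "(\<forall>pl\<in>Idx N n. Xapply N n \<nu> g pl = f pl) \<longleftrightarrow>
         (\<forall>lam\<in>Lam N n. \<forall>m\<in>floorM N n lam. Dapply N n \<nu> m lam f = 0)"
proof -
  have "Xapply N n \<nu> g (m, lam) = f (m, lam) \<longleftrightarrow> (m \<in> floorM N n lam \<longrightarrow> Dapply N n \<nu> m lam f = 0)"
    if "lam \<in> Lam N n" "m \<in> Mlam N n lam" for m lam
    using Xapply_eq_minus_floorM[OF N3 n_ok bspec[OF g_def] _ bspec[OF conv] bspec[OF nonzero]] that
    by simp
  then show ?thesis
    by (auto simp: Idx_iff floorM_def)
qed

end
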